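(* Let $G$ be a Polish group. Every openly Haar null subset $A\subseteq G$ is contained in a $G_\delta$ set that is Haar null.
   Context: A Polish group is a topological group whose topology is separable and completely metrizable. A set $A\subseteq G$ is Haar null if there are a Borel set $B\supseteq A$ and a Borel probability measure $\mu$ on $G$ with $\mu(gBh)=0$ for all $g,h\in G$. A set $A\subseteq G$ is openly Haar null if there is a Borel probability measure $\mu$ on $G$ such that for every $\varepsilon>0$ there is an open set $U\supseteq A$ with $\mu(gUh)<\varepsilon$ for all $g,h\in G$. *)

theory Defs
  imports "HOL-Probability.Probability"
begin

text \<open>A Polish group is modelled as a type of class
  polish_space (separable complete metric space) together with
  topological_group_add (a possibly non-commutative group, written additively,
  with continuous group operations w.r.t. the same topology).\<close>

definition haar_null :: "'a::{polish_space, topological_group_add} set \<Rightarrow> bool" where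
  "haar_null A \<longleftrightarrow>
     (\<exists>B \<in> sets borel. A \<subseteq> B \<and>
       (\<exists>\<mu>::'a measure. prob_space \<mu> \<and> sets \<mu> = sets borel \<and>
          (\<forall>g h. emeasure \<mu> ((\<lambda>x. g + x + h) ` B) = 0)))"

definition openly_haar_null :: "'a::{polish_space, topological_group_add} set \<Rightarrow> bool" where
  "openly_haar_null A \<longleftrightarrow>
     (\<exists>\<mu>::'a measure. prob_space \<mu> \<and> sets \<mu> = sets borel \<and>
        (\<forall>\<epsilon>::real. \<epsilon> > 0 \<longrightarrow>
           (\<exists>U. open U \<and> A \<subseteq> U \<and>
              (\<forall>g h. emeasure \<mu> ((\<lambda>x. g + x + h) ` U) < ennreal \<epsilon>))))"

end

theory Submission
  imports Defs
begin

text \<open>If \<mu> witnesses that A is openly Haar null, choose open sets U n \<supseteq> A all of whose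
  two-sided translates have \<mu>-measure below 1/(n+1). Their intersection B is a G\<delta>
  containing A, and every translate of B lies in the corresponding translate of each U n,
  so it is \<mu>-null: B is Haar null with the same witness \<mu>.\<close>

lemma two_sided_translation_image_eq_vimage:
  fixes g h :: "'a::group_add"
  shows "(\<lambda>x. g + x + h) ` S = (\<lambda>y. - g + y + - h) -` S"
proof (intro set_eqI iffI)
  fix y assume "y \<in> (\<lambda>y. - g + y + - h) -` S"
  moreover have "y = g + (- g + y + - h) + h" by (simp add: add.assoc)
  ultimately show "y \<in> (\<lambda>x. g + x + h) ` S" by blast
qed (auto simp: add.assoc)

lemma open_two_sided_translation:
  fixes U :: "'a::topological_group_add set"
  assumes "open U"
  shows "open ((\<lambda>x. g + x + h) ` U)"
proof -
  have "continuous_on UNIV (\<lambda>y::'a. - g + y + - h)"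
    by (intro continuous_intros)
  then show ?thesis
    using assms by (simp add: two_sided_translation_image_eq_vimage continuous_on_open_vimage)
qed

lemma emeasure_eq_0_if_small_measurable_superset:
  assumes "\<And>e::real. e > 0 \<Longrightarrow> \<exists>U \<in> sets M. S \<subseteq> U \<and> emeasure M U < ennreal e"
  shows "emeasure M S = 0"
proof -
  have "emeasure M S \<le> 0"
  proof (rule ennreal_le_epsilon)
    fix e :: real assume "e > 0"
    then obtain U where "U \<in> sets M" "S \<subseteq> U" "emeasure M U < ennreal e"
      using assms by blast
    then show "emeasure M S \<le> 0 + ennreal e" using emeasure_mono[of S U M] by simp
  qed
  then show ?thesis by simp
qed

lemma openly_haar_null_open_covers:
  assumes "openly_haar_null A"
  obtains \<mu> :: "'a::{polish_space, topological_group_add} measure" and U :: "nat \<Rightarrow> 'a set"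
  where "prob_space \<mu>" "sets \<mu> = sets borel" "\<And>n. open (U n)" "\<And>n. A \<subseteq> U n"
    "\<And>n g h. emeasure \<mu> ((\<lambda>x. g + x + h) ` U n) < ennreal (inverse (real (Suc n)))"
proof -
  obtain \<mu> :: "'a measure" where \<mu>: "prob_space \<mu>" "sets \<mu> = sets borel"
    and small: "\<And>\<epsilon>::real. \<epsilon> > 0 \<Longrightarrow> \<exists>U. open U \<and> A \<subseteq> U \<and>
              (\<forall>g h. emeasure \<mu> ((\<lambda>x. g + x + h) ` U) < ennreal \<epsilon>)"
    using assms unfolding openly_haar_null_def by blast
  have "\<forall>n. \<exists>U. open U \<and> A \<subseteq> U \<and>
      (\<forall>g h. emeasure \<mu> ((\<lambda>x. g + x + h) ` U) < ennreal (inverse (real (Suc n))))"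
    using small by simp
  then obtain U where "\<forall>n. open (U n) \<and> A \<subseteq> U n \<and>
      (\<forall>g h. emeasure \<mu> ((\<lambda>x. g + x + h) ` U n) < ennreal (inverse (real (Suc n))))"
    by (rule choice[THEN exE])
  then show ?thesis using that[OF \<mu>] by blast
qed

lemma haar_null_Inter_of_small_open_sets:
  fixes U :: "nat \<Rightarrow> 'a::{polish_space, topological_group_add} set"
  assumes "prob_space \<mu>" "sets \<mu> = sets borel" "\<And>n. open (U n)"
    and small: "\<And>n g h. emeasure \<mu> ((\<lambda>x. g + x + h) ` U n) < ennreal (inverse (real (Suc n)))"
  shows "haar_null (\<Inter>n. U n)"
proof -
  have null: "emeasure \<mu> ((\<lambda>x. g + x + h) ` (\<Inter>m. U m)) = 0" for g h
  proof (rule emeasure_eq_0_if_small_measurable_superset)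
    fix e :: real assume "e > 0"
    then obtain n where "inverse (real (Suc n)) < e"
      by (auto dest: reals_Archimedean)
    have "emeasure \<mu> ((\<lambda>x. g + x + h) ` U n) < ennreal (inverse (real (Suc n)))"
      by (rule small)
    also have "\<dots> < ennreal e"
      using \<open>inverse (real (Suc n)) < e\<close> \<open>e > 0\<close> by (intro ennreal_lessI)
    finally have "emeasure \<mu> ((\<lambda>x. g + x + h) ` U n) < ennreal e" .
    moreover have "(\<lambda>x. g + x + h) ` U n \<in> sets \<mu>"
      using open_two_sided_translation[OF \<open>open (U n)\<close>] \<open>sets \<mu> = sets borel\<close> by simp
    moreover have "(\<lambda>x. g + x + h) ` (\<Inter>m. U m) \<subseteq> (\<lambda>x. g + x + h) ` U n"
      by (intro image_mono) blast
    ultimately show "\<exists>V \<in> sets \<mu>. (\<lambda>x. g + x + h) ` (\<Inter>m. U m) \<subseteq> V \<and> emeasure \<mu> V < ennreal e"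
      by blast
  qed
  moreover have "(\<Inter>m. U m) \<in> sets borel"
    using \<open>\<And>n. open (U n)\<close> by (intro sets.countable_INT) auto
  ultimately show ?thesis
    unfolding haar_null_def using \<open>prob_space \<mu>\<close> \<open>sets \<mu> = sets borel\<close> by blast
qed

theorem proposition4p33:
  fixes A :: "'a::{polish_space, topological_group_add} set"
  assumes "openly_haar_null A"
  shows "\<exists>B. gdelta_in euclidean B \<and> A \<subseteq> B \<and> haar_null B"
proof -
  obtain \<mu> :: "'a measure" and U where "prob_space \<mu>" "sets \<mu> = sets borel"
    "\<And>n. open (U n)" "\<And>n. A \<subseteq> U n"
    "\<And>n g h. emeasure \<mu> ((\<lambda>x. g + x + h) ` U n) < ennreal (inverse (real (Suc n)))"
    using openly_haar_null_open_covers[OF assms] by blast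
  then have "haar_null (\<Inter>n. U n)"
    by (intro haar_null_Inter_of_small_open_sets)
  moreover have "gdelta_in euclidean (\<Inter>n. U n)"
    using \<open>\<And>n. open (U n)\<close> by (intro gdelta_in_Inter open_imp_gdelta_in) auto
  moreover have "A \<subseteq> (\<Inter>n. U n)"
    using \<open>\<And>n. A \<subseteq> U n\<close> by blast
  ultimately show ?thesis by blast
qed

end
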